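(* There exist boomerang subgroups $\Delta < F_d$ of the free group $F_d$ of rank $d$ such that the only invariant random subgroup of $F_d$ supported on the closure (in $\mathrm{Sub}(F_d)$) of the conjugacy class $\{g\Delta g^{-1} \mid g \in F_d\}$ is the Dirac measure at the trivial subgroup.
   Context: For a countable group $G$, $\mathrm{Sub}(G)$ is the set of subgroups of $G$ with the topology induced from the product topology via $\mathrm{Sub}(G) \subset \{0,1\}^G$ (the Chabauty space); it is compact and $G$ acts on it continuously by conjugation. A subgroup $\Delta \leq G$ is a boomerang subgroup if for every $g \in G$ there is a sequence $n_k \to \infty$ with $\lim_{k\to\infty} g^{n_k}\Delta g^{-n_k} = \Delta$. An invariant random subgroup of $G$ is a conjugation-invariant Borel probability measure on $\mathrm{Sub}(G)$. *)

theory Defs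
  imports "HOL-Analysis.Analysis" "HOL-Probability.Probability" "HOL-Algebra.Algebra"
begin

text \<open>A letter (i, True) is the generator x_i, (i, False) its inverse.\<close>
type_synonym letter = "nat \<times> bool"

definition inverse_letters :: "letter \<Rightarrow> letter \<Rightarrow> bool" where
  "inverse_letters x y \<longleftrightarrow> fst x = fst y \<and> snd x \<noteq> snd y"

definition reduced :: "letter list \<Rightarrow> bool" where
  "reduced w \<longleftrightarrow> (\<forall>i. Suc i < length w \<longrightarrow> \<not> inverse_letters (w ! i) (w ! Suc i))"

definition reduce :: "letter list \<Rightarrow> letter list" where
  "reduce w = foldr (\<lambda>x acc. case acc of [] \<Rightarrow> [x]
                         | y # ys \<Rightarrow> (if inverse_letters x y then ys else x # acc)) w []"

definition free_group :: "nat \<Rightarrow> letter list monoid" where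
  "free_group d = \<lparr> carrier = {w. reduced w \<and> (\<forall>x \<in> set w. fst x < d)},
                     mult = (\<lambda>w v. reduce (w @ v)),
                     one = [] \<rparr>"

definition Sub :: "('a, 'm) monoid_scheme \<Rightarrow> 'a set set" where
  "Sub G = {H. subgroup H G}"

text \<open>Subspace topology on Sub(G) induced from the product topology on {0,1}^G:
  generated by the subbasic cylinder sets {H. g \<in> H} and {H. g \<notin> H}, g \<in> G.\<close>
definition chabauty :: "('a, 'm) monoid_scheme \<Rightarrow> 'a set topology" where
  "chabauty G = subtopology
     (topology_generated_by ({{H. g \<in> H} | g. g \<in> carrier G} \<union> {{H. g \<notin> H} | g. g \<in> carrier G}))
     (Sub G)"

definition chabauty_borel :: "('a, 'm) monoid_scheme \<Rightarrow> 'a set measure" where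
  "chabauty_borel G = sigma (Sub G) {U. openin (chabauty G) U}"

definition conj_sub :: "('a, 'm) monoid_scheme \<Rightarrow> 'a \<Rightarrow> 'a set \<Rightarrow> 'a set" where
  "conj_sub G g H = {g \<otimes>\<^bsub>G\<^esub> h \<otimes>\<^bsub>G\<^esub> inv\<^bsub>G\<^esub> g | h. h \<in> H}"

definition boomerang :: "('a, 'm) monoid_scheme \<Rightarrow> 'a set \<Rightarrow> bool" where
  "boomerang G \<Delta> \<longleftrightarrow> subgroup \<Delta> G \<and>
     (\<forall>g \<in> carrier G. \<exists>n :: nat \<Rightarrow> nat. filterlim n at_top sequentially \<and>
        limitin (chabauty G) (\<lambda>k. conj_sub G (g [^]\<^bsub>G\<^esub> n k) \<Delta>) \<Delta> sequentially)"

definition IRS :: "('a, 'm) monoid_scheme \<Rightarrow> 'a set measure \<Rightarrow> bool" where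
  "IRS G M \<longleftrightarrow> prob_space M \<and> sets M = sets (chabauty_borel G) \<and>
     (\<forall>g \<in> carrier G. distr M M (conj_sub G g) = M)"

definition conj_class :: "('a, 'm) monoid_scheme \<Rightarrow> 'a set \<Rightarrow> 'a set set" where
  "conj_class G \<Delta> = {conj_sub G g \<Delta> | g. g \<in> carrier G}"

end

(*
  Let level w be the exponent sum of the generator x0 in w.  For a set T of integers,
  Delta T d p is the stabiliser of a vertex at level p in the Schreier graph built from
  copies of the x0-line, in which each other generator is a loop at the levels in T and
  joins distinct copies at all remaining levels.  Conjugating by g moves the base point
  to level p - level g.

  Let S be the set of signed sums of the lacunary sequence L i = (i + 8)!.  Near 0, S
  agrees with its translates by +-L K.  Hence, unless level g = 0 (and then g normalises
  Delta S d 0), powers of g can move the base point by +-L K with K -> oo, and these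
  conjugates converge back to Delta S d 0, which is therefore a boomerang subgroup.

  In the other direction, a word w ~= 1 lies in Delta S d q only if its path visits S
  within distance length w of q.  The gaps of S keep the conjugates of w by x0^(3 L n),
  for n large, from lying two at a time in a conjugate of Delta S d 0, and so in any
  subgroup of the closure of the conjugacy class.  For an invariant random subgroup
  carried by that closure, these events are disjoint and all as likely as w in H.
  So w in H has probability 0 for every w ~= 1, and the measure is the Dirac mass at
  the trivial subgroup.
*)
theory Submission
  imports Defs
begin

lemma conj_sub_memI: "h \<in> H \<Longrightarrow> g \<otimes>\<^bsub>G\<^esub> h \<otimes>\<^bsub>G\<^esub> inv\<^bsub>G\<^esub> g \<in> conj_sub G g H"
  unfolding conj_sub_def by blast

context group
begin

lemma conj_sub_mem_iff:
  assumes "H \<subseteq> carrier G" "g \<in> carrier G" "x \<in> carrier G"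
  shows "x \<in> conj_sub G g H \<longleftrightarrow> inv g \<otimes> x \<otimes> g \<in> H"
proof
  assume "x \<in> conj_sub G g H"
  then obtain h where "h \<in> H" "x = g \<otimes> h \<otimes> inv g"
    by (auto simp: conj_sub_def)
  moreover have "inv g \<otimes> (g \<otimes> h \<otimes> inv g) \<otimes> g = h"
    using conjugation_is_surj[of "inv g" h] assms \<open>h \<in> H\<close> by auto
  ultimately show "inv g \<otimes> x \<otimes> g \<in> H"
    by simp
next
  assume "inv g \<otimes> x \<otimes> g \<in> H"
  moreover have "g \<otimes> (inv g \<otimes> x \<otimes> g) \<otimes> inv g = x"
    using conjugation_is_surj assms by simp
  ultimately show "x \<in> conj_sub G g H"
    by (metis conj_sub_memI)
qed

lemma subgroup_conj_sub:
  assumes "subgroup H G" "g \<in> carrier G"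
  shows "subgroup (conj_sub G g H) G"
proof -
  have "conj_sub G g H = g <# H #> inv g"
    by (auto simp: conj_sub_def l_coset_def r_coset_def)
  then show ?thesis
    using subgroup_conjugation_is_surj2 assms by simp
qed

end

section \<open>The Chabauty topology\<close>

abbreviation chabauty_subbasis :: "('a, 'm) monoid_scheme \<Rightarrow> 'a set set set" where
  "chabauty_subbasis G \<equiv> {{H. g \<in> H} | g. g \<in> carrier G} \<union> {{H. g \<notin> H} | g. g \<in> carrier G}"

lemma topspace_chabauty:
  assumes "carrier G \<noteq> {}"
  shows "topspace (chabauty G) = Sub G"
proof -
  obtain g where "g \<in> carrier G"
    using assms by blast
  then have "\<Union> (chabauty_subbasis G) = UNIV"
    by blast
  then show ?thesis
    by (simp add: chabauty_def)
qed

lemma openin_chabauty_mem: "g \<in> carrier G \<Longrightarrow> openin (chabauty G) {H \<in> Sub G. g \<in> H}"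
  and openin_chabauty_not_mem: "g \<in> carrier G \<Longrightarrow> openin (chabauty G) {H \<in> Sub G. g \<notin> H}"
  unfolding chabauty_def openin_subtopology
  by (auto intro!: topology_generated_by_Basis)

lemma limitin_topology_generated_by:
  assumes "l \<in> \<Union>\<S>" and "\<And>U. U \<in> \<S> \<Longrightarrow> l \<in> U \<Longrightarrow> eventually (\<lambda>k. f k \<in> U) F"
  shows "limitin (topology_generated_by \<S>) f l F"
proof -
  have "eventually (\<lambda>k. f k \<in> U) F" if "generate_topology_on \<S> U" "l \<in> U" for U
    using that
  proof (induction rule: generate_topology_on.induct)
    case (Int a b)
    then show ?case
      by (auto intro: eventually_conj)
  next
    case (UN K)
    then obtain k where k: "k \<in> K" "l \<in> k"
      by blast
    with UN.IH have "eventually (\<lambda>i. f i \<in> k) F"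
      by blast
    then show ?case
      by (rule eventually_mono) (use k in blast)
  qed (use assms in auto)
  then show ?thesis
    using assms(1) by (simp add: limitin_def openin_topology_generated_by_iff)
qed

lemma limitin_chabauty:
  assumes "carrier G \<noteq> {}" "\<Delta> \<in> Sub G" "eventually (\<lambda>k. f k \<in> Sub G) F"
    and "\<And>g. g \<in> carrier G \<Longrightarrow> eventually (\<lambda>k. g \<in> f k \<longleftrightarrow> g \<in> \<Delta>) F"
  shows "limitin (chabauty G) f \<Delta> F"
proof -
  have "limitin (topology_generated_by (chabauty_subbasis G)) f \<Delta> F"
  proof (rule limitin_topology_generated_by)
    show "\<Delta> \<in> \<Union> (chabauty_subbasis G)"
      using assms(1) by blast
  next
    fix U assume "U \<in> chabauty_subbasis G" "\<Delta> \<in> U"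
    then obtain g where g: "g \<in> carrier G" and "U = {H. g \<in> H} \<or> U = {H. g \<notin> H}"
      by blast
    with \<open>\<Delta> \<in> U\<close> show "eventually (\<lambda>k. f k \<in> U) F"
      using assms(4)[OF g] by (auto elim!: eventually_mono)
  qed
  then show ?thesis
    using assms(2,3) by (simp add: chabauty_def limitin_subtopology)
qed

lemma continuous_map_conj_sub:
  fixes G (structure)
  assumes "group G" and g: "g \<in> carrier G"
  shows "continuous_map (chabauty G) (chabauty G) (conj_sub G g)"
proof -
  interpret group G by fact
  have top: "topspace (chabauty G) = Sub G"
    using g by (intro topspace_chabauty) blast
  have "continuous_map (chabauty G) (topology_generated_by (chabauty_subbasis G)) (conj_sub G g)"
  proof (rule continuous_on_generated_topo)
    fix U assume "U \<in> chabauty_subbasis G"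
    then obtain x where x: "x \<in> carrier G" and U: "U = {H. x \<in> H} \<or> U = {H. x \<notin> H}"
      by blast
    have y: "inv g \<otimes> x \<otimes> g \<in> carrier G"
      using x g by simp
    have mem: "x \<in> conj_sub G g H \<longleftrightarrow> inv g \<otimes> x \<otimes> g \<in> H" if "H \<in> Sub G" for H
      using conj_sub_mem_iff[OF _ g x] that by (simp add: Sub_def subgroup.subset)
    from U show "openin (chabauty G) (conj_sub G g -` U \<inter> topspace (chabauty G))"
    proof
      assume "U = {H. x \<in> H}"
      then have "conj_sub G g -` U \<inter> topspace (chabauty G) = {H \<in> Sub G. inv g \<otimes> x \<otimes> g \<in> H}"
        using mem by (auto simp: top)
      then show ?thesis
        using openin_chabauty_mem[OF y] by simp
    next
      assume "U = {H. x \<notin> H}"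
      then have "conj_sub G g -` U \<inter> topspace (chabauty G) = {H \<in> Sub G. inv g \<otimes> x \<otimes> g \<notin> H}"
        using mem by (auto simp: top)
      then show ?thesis
        using openin_chabauty_not_mem[OF y] by simp
    qed
  qed (use g in blast)
  moreover have "conj_sub G g \<in> topspace (chabauty G) \<rightarrow> Sub G"
    using g by (auto simp: top Sub_def subgroup_conj_sub)
  ultimately show ?thesis
    by (simp add: chabauty_def continuous_map_into_subtopology)
qed

lemma closure_of_chabauty_at_most_one_mem:
  assumes a: "\<And>n. a n \<in> carrier G" and "S \<subseteq> Sub G"
    and S: "\<And>H m n. H \<in> S \<Longrightarrow> a m \<in> H \<Longrightarrow> a n \<in> H \<Longrightarrow> m = n"
    and H: "H \<in> chabauty G closure_of S" "a m \<in> H" "a n \<in> H"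
  shows "m = n"
proof -
  define F where "F = {H \<in> Sub G. \<forall>m n. a m \<in> H \<longrightarrow> a n \<in> H \<longrightarrow> m = n}"
  have top: "topspace (chabauty G) = Sub G"
    using a by (intro topspace_chabauty) blast
  have "topspace (chabauty G) - F =
      (\<Union>(m, n) \<in> {(m, n). m \<noteq> n}. {H \<in> Sub G. a m \<in> H} \<inter> {H \<in> Sub G. a n \<in> H})"
    by (auto simp: top F_def)
  moreover have "openin (chabauty G)
      (\<Union>(m, n) \<in> {(m, n). m \<noteq> n}. {H \<in> Sub G. a m \<in> H} \<inter> {H \<in> Sub G. a n \<in> H})"
    using a by (intro openin_Union) (auto intro!: openin_Int openin_chabauty_mem)
  ultimately have "closedin (chabauty G) F"
    by (simp add: closedin_def top F_def)
  moreover have "S \<subseteq> F"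
    using S \<open>S \<subseteq> Sub G\<close> by (auto simp: F_def)
  ultimately show ?thesis
    using closure_of_minimal H by (fastforce simp: F_def)
qed

section \<open>Invariant random subgroups\<close>

lemma measurable_sigma_openin:
  assumes "continuous_map T T' f"
  shows "f \<in> measurable (sigma (topspace T) {V. openin T V}) (sigma (topspace T') {V. openin T' V})"
proof (rule measurable_measure_of)
  have opens: "{V. openin T V} \<subseteq> Pow (topspace T)"
    by (auto dest: openin_subset)
  show "f -` V \<inter> space (sigma (topspace T) {V. openin T V}) \<in> sets (sigma (topspace T) {V. openin T V})"
    if "V \<in> {V. openin T' V}" for V
    using openin_continuous_map_preimage[OF assms] that opens
    by (auto simp: space_measure_of sets_measure_of vimage_def Int_def conj_commute intro: sigma_sets.Basic)
  show "f \<in> space (sigma (topspace T) {V. openin T V}) \<rightarrow> topspace T'"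
    using continuous_map_image_subset_topspace[OF assms] opens by (auto simp: space_measure_of)
qed (auto dest: openin_subset)

lemma openin_chabauty_subset_Sub: "openin (chabauty G) U \<Longrightarrow> U \<subseteq> Sub G"
  using openin_subset[of "chabauty G" U] by (auto simp: chabauty_def)

lemma space_chabauty_borel [simp]: "space (chabauty_borel G) = Sub G"
  unfolding chabauty_borel_def by (rule space_measure_of) (auto dest: openin_chabauty_subset_Sub)

lemma sets_chabauty_borel_openin: "openin (chabauty G) U \<Longrightarrow> U \<in> sets (chabauty_borel G)"
  unfolding chabauty_borel_def
  by (subst sets_measure_of) (auto dest: openin_chabauty_subset_Sub intro: sigma_sets.Basic)

lemma measurable_conj_sub:
  assumes "group G" "g \<in> carrier G"
  shows "conj_sub G g \<in> measurable (chabauty_borel G) (chabauty_borel G)"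
proof -
  have "topspace (chabauty G) = Sub G"
    using assms(2) by (intro topspace_chabauty) blast
  then show ?thesis
    using measurable_sigma_openin[OF continuous_map_conj_sub[OF assms]] by (simp add: chabauty_borel_def)
qed

lemma space_IRS: "IRS G M \<Longrightarrow> space M = Sub G"
  using sets_eq_imp_space_eq[of M "chabauty_borel G"] by (simp add: IRS_def)

lemma sets_IRS_mem: "IRS G M \<Longrightarrow> g \<in> carrier G \<Longrightarrow> {H \<in> Sub G. g \<in> H} \<in> sets M"
  using sets_chabauty_borel_openin[OF openin_chabauty_mem] by (simp add: IRS_def)

lemma IRS_emeasure_conj_mem:
  fixes G (structure)
  assumes "group G" and M: "IRS G M" and g: "g \<in> carrier G" and x: "x \<in> carrier G"
  shows "emeasure M {H \<in> Sub G. g \<otimes> x \<otimes> inv g \<in> H} = emeasure M {H \<in> Sub G. x \<in> H}"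
proof -
  interpret group G by fact
  have y: "g \<otimes> x \<otimes> inv g \<in> carrier G"
    using g x by simp
  have "conj_sub G g \<in> measurable M M"
    using measurable_conj_sub[OF assms(1) g] M by (simp add: IRS_def cong: measurable_cong_sets)
  then have "emeasure M {H \<in> Sub G. g \<otimes> x \<otimes> inv g \<in> H}
      = emeasure M (conj_sub G g -` {H \<in> Sub G. g \<otimes> x \<otimes> inv g \<in> H} \<inter> space M)"
    using M g sets_IRS_mem[OF M y] emeasure_distr[of "conj_sub G g" M M] by (simp add: IRS_def)
  also have "conj_sub G g -` {H \<in> Sub G. g \<otimes> x \<otimes> inv g \<in> H} \<inter> space M = {H \<in> Sub G. x \<in> H}"
  proof -
    have "g \<otimes> x \<otimes> inv g \<in> conj_sub G g H \<longleftrightarrow> x \<in> H" if "H \<in> Sub G" for H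
      using conj_sub_mem_iff[OF _ g y] that x conjugation_is_surj[of "inv g" x] g
      by (simp add: Sub_def subgroup.subset m_assoc)
    then show ?thesis
      using g by (auto simp: space_IRS[OF M] Sub_def subgroup_conj_sub)
  qed
  finally show ?thesis .
qed

text \<open>On \<open>S\<close> the events \<open>t n w (t n)\<inverse> \<in> H\<close> are disjoint, and by invariance they are all
  as likely as \<open>w \<in> H\<close>.\<close>
lemma IRS_emeasure_mem_eq_0:
  fixes G (structure) and t :: "nat \<Rightarrow> 'a"
  assumes "group G" and M: "IRS G M" and full: "emeasure M S = 1"
    and w: "w \<in> carrier G" and t: "\<And>n. t n \<in> carrier G"
    and separated: "\<And>H m n. H \<in> S \<Longrightarrow> t m \<otimes> w \<otimes> inv t m \<in> H \<Longrightarrow>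
      t n \<otimes> w \<otimes> inv t n \<in> H \<Longrightarrow> m = n"
  shows "emeasure M {H \<in> Sub G. w \<in> H} = 0"
proof -
  interpret group G by fact
  interpret prob_space M
    using M by (simp add: IRS_def)
  define E where "E x = {H \<in> Sub G. x \<in> H}" for x
  define A where "A n = E (t n \<otimes> w \<otimes> inv t n) \<inter> S" for n
  have conj: "t n \<otimes> w \<otimes> inv t n \<in> carrier G" for n
    using t w by simp
  have "S \<in> sets M"
    using full emeasure_notin_sets by fastforce
  then have A: "A n \<in> sets M" for n
    using sets_IRS_mem[OF M conj] by (simp add: A_def E_def)
  have "AE H in M. H \<in> S"
    using full by (intro AE_prob_1) (simp add: emeasure_eq_measure)
  then have "measure M (A n) = measure M (E (t n \<otimes> w \<otimes> inv t n))" for n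
    using A sets_IRS_mem[OF M conj] by (intro measure_eq_AE) (auto simp: A_def E_def elim: AE_mp)
  also have "\<dots> n = measure M (E w)" for n
    using IRS_emeasure_conj_mem[OF assms(1) M t w] by (simp add: measure_def E_def)
  finally have measure_A: "measure M (A n) = measure M (E w)" for n .
  have "disjoint_family A"
    using separated by (fastforce simp: disjoint_family_on_def A_def E_def)
  then have "(\<lambda>n. measure M (A n)) sums measure M (\<Union>n. A n)"
    using A by (intro finite_measure_UNION) auto
  then have "summable (\<lambda>n. measure M (E w))"
    by (simp add: measure_A sums_summable)
  then have "measure M (E w) = 0"
    by (simp add: summable_const_iff)
  then show ?thesis
    by (simp add: emeasure_eq_measure E_def)
qed

lemma IRS_eq_return_trivial:
  fixes G (structure)
  assumes "group G" "countable (carrier G)" and M: "IRS G M"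
    and null: "\<And>w. w \<in> carrier G \<Longrightarrow> w \<noteq> \<one> \<Longrightarrow> emeasure M {H \<in> Sub G. w \<in> H} = 0"
  shows "M = return (chabauty_borel G) {\<one>}"
proof -
  interpret prob_space M
    using M by (simp add: IRS_def)
  have "AE H in M. \<forall>w \<in> carrier G - {\<one>}. w \<notin> H"
  proof (subst AE_ball_countable)
    show "countable (carrier G - {\<one>})"
      using assms(2) by simp
    show "\<forall>w \<in> carrier G - {\<one>}. AE H in M. w \<notin> H"
    proof
      fix w assume "w \<in> carrier G - {\<one>}"
      then have "{H \<in> Sub G. w \<in> H} \<in> null_sets M"
        using null sets_IRS_mem[OF M] by auto
      then show "AE H in M. w \<notin> H"
        by (rule AE_I') (auto simp: space_IRS[OF M])
    qed
  qed
  then have "AE H in M. H = {\<one>}"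
    using AE_space
  proof eventually_elim
    case (elim H)
    then show "H = {\<one>}"
      using space_IRS[OF M] by (auto simp: Sub_def dest: subgroup.one_closed subgroup.mem_carrier)
  qed
  then have "M = return M {\<one>}"
    by (rule AE_eq_constD)
  then show ?thesis
    using M by (simp add: IRS_def cong: return_cong)
qed

section \<open>The free group\<close>

definition letter_inv :: "letter \<Rightarrow> letter" where
  "letter_inv x = (fst x, \<not> snd x)"

definition word_inv :: "letter list \<Rightarrow> letter list" where
  "word_inv w = rev (map letter_inv w)"

definition push :: "letter \<Rightarrow> letter list \<Rightarrow> letter list" where
  "push x w = (case w of [] \<Rightarrow> [x] | y # ys \<Rightarrow> (if inverse_letters x y then ys else x # w))"

lemma reduce_eq_foldr_push: "reduce w = foldr push w []"
  unfolding reduce_def push_def by simp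

lemma reduce_Nil [simp]: "reduce [] = []"
  by (simp add: reduce_def)

lemma letter_inv_letter_inv [simp]: "letter_inv (letter_inv x) = x"
  and fst_letter_inv [simp]: "fst (letter_inv x) = fst x"
  and snd_letter_inv [simp]: "snd (letter_inv x) = (\<not> snd x)"
  by (simp_all add: letter_inv_def)

lemma inverse_letters_iff: "inverse_letters x y \<longleftrightarrow> y = letter_inv x"
  by (cases x; cases y) (auto simp: inverse_letters_def letter_inv_def)

lemma reduced_Nil [simp]: "reduced []"
  and reduced_singleton [simp]: "reduced [x]"
  by (simp_all add: reduced_def)

lemma reduced_Cons_Cons [simp]:
  "reduced (x # y # w) \<longleftrightarrow> y \<noteq> letter_inv x \<and> reduced (y # w)"
  unfolding reduced_def
  by (auto simp: inverse_letters_iff nth_Cons split: nat.splits)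

lemma reduced_ConsD: "reduced (x # w) \<Longrightarrow> reduced w"
  by (cases w) auto

lemma push_Cons: "push x (y # w) = (if y = letter_inv x then w else x # y # w)"
  by (simp add: push_def inverse_letters_iff)

lemma reduced_push: "reduced w \<Longrightarrow> reduced (push x w)"
  by (cases w) (auto simp: push_def inverse_letters_iff dest: reduced_ConsD)

lemma reduced_foldr_push: "reduced w \<Longrightarrow> reduced (foldr push u w)"
  by (induction u) (auto intro: reduced_push)

lemma reduced_reduce: "reduced (reduce w)"
  by (simp add: reduce_eq_foldr_push reduced_foldr_push)

lemma reduce_eq_self: "reduced w \<Longrightarrow> reduce w = w"
proof (induction w)
  case (Cons x w)
  then show ?case
    by (cases w) (auto simp: reduce_eq_foldr_push push_def inverse_letters_iff dest: reduced_ConsD)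
qed simp

lemma push_push_letter_inv: "reduced w \<Longrightarrow> push x (push (letter_inv x) w) = w"
  by (cases w rule: remdups_adj.cases) (auto simp: push_def inverse_letters_iff)

lemma push_foldr_push:
  assumes "reduced u" "reduced w"
  shows "push x (foldr push u w) = foldr push (push x u) w"
proof (cases u)
  case (Cons y v)
  then show ?thesis
    using push_push_letter_inv[OF reduced_foldr_push[OF assms(2)], of x v]
    by (auto simp: push_Cons)
qed (simp add: push_def)

lemma foldr_push_reduce: "reduced w \<Longrightarrow> foldr push (reduce u) w = foldr push u w"
proof (induction u)
  case (Cons x u)
  have "foldr push (reduce (x # u)) w = foldr push (push x (reduce u)) w"
    by (simp add: reduce_eq_foldr_push)
  also have "\<dots> = push x (foldr push (reduce u) w)"
    using push_foldr_push[OF reduced_reduce Cons.prems] by simp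
  finally show ?case
    using Cons by simp
qed simp

lemma reduce_append: "reduce (u @ v) = foldr push u (reduce v)"
  by (simp add: reduce_eq_foldr_push)

lemma reduce_append_reduce_left [simp]: "reduce (reduce u @ v) = reduce (u @ v)"
  by (simp add: reduce_append foldr_push_reduce reduced_reduce)

lemma reduce_append_reduce_right [simp]: "reduce (u @ reduce v) = reduce (u @ v)"
  by (simp add: reduce_append reduce_eq_self reduced_reduce)

lemma reduce_Cons_letter_inv: "reduce (x # letter_inv x # w) = reduce w"
  by (simp add: reduce_eq_foldr_push push_push_letter_inv[OF reduced_foldr_push])

lemma word_inv_Nil [simp]: "word_inv [] = []"
  and word_inv_Cons: "word_inv (x # w) = word_inv w @ [letter_inv x]"
  and word_inv_append: "word_inv (u @ v) = word_inv v @ word_inv u"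
  and word_inv_word_inv [simp]: "word_inv (word_inv w) = w"
  by (simp_all add: word_inv_def rev_map comp_def)

lemma reduce_word_inv_append [simp]: "reduce (word_inv u @ u) = []"
proof (induction u)
  case (Cons x u)
  have "reduce (word_inv (x # u) @ x # u) = reduce (word_inv u @ reduce (letter_inv x # x # u))"
    by (simp add: word_inv_Cons)
  also have "\<dots> = reduce (word_inv u @ u)"
    using reduce_Cons_letter_inv[of "letter_inv x"] by simp
  finally show ?case
    using Cons by simp
qed simp

lemma reduce_append_word_inv [simp]: "reduce (u @ word_inv u) = []"
  using reduce_word_inv_append[of "word_inv u"] by simp

lemma set_push: "set (push x w) \<subseteq> insert x (set w)"
  by (cases w) (auto simp: push_def)

lemma set_reduce: "set (reduce w) \<subseteq> set w"
proof -
  have "set (foldr push u []) \<subseteq> set u" for u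
    by (induction u) (use set_push in fastforce)+
  then show ?thesis
    by (simp add: reduce_eq_foldr_push)
qed

lemma carrier_free_group: "carrier (free_group d) = {w. reduced w \<and> (\<forall>x \<in> set w. fst x < d)}"
  and mult_free_group: "v \<otimes>\<^bsub>free_group d\<^esub> w = reduce (v @ w)"
  and one_free_group: "\<one>\<^bsub>free_group d\<^esub> = []"
  by (simp_all add: free_group_def)

lemma reduce_in_carrier_free_group:
  "(\<forall>x \<in> set w. fst x < d) \<Longrightarrow> reduce w \<in> carrier (free_group d)"
  using set_reduce[of w] by (auto simp: carrier_free_group reduced_reduce)

lemma group_free_group: "group (free_group d)"
proof (rule groupI)
  fix x assume "x \<in> carrier (free_group d)"
  then have "reduce (word_inv x) \<in> carrier (free_group d)"
    by (intro reduce_in_carrier_free_group) (auto simp: carrier_free_group word_inv_def)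
  then show "\<exists>y \<in> carrier (free_group d). y \<otimes>\<^bsub>free_group d\<^esub> x = \<one>\<^bsub>free_group d\<^esub>"
    by (intro bexI[of _ "reduce (word_inv x)"]) (simp_all add: mult_free_group one_free_group)
next
  fix x y assume "x \<in> carrier (free_group d)" "y \<in> carrier (free_group d)"
  then show "x \<otimes>\<^bsub>free_group d\<^esub> y \<in> carrier (free_group d)"
    unfolding mult_free_group by (intro reduce_in_carrier_free_group) (auto simp: carrier_free_group)
qed (auto simp: carrier_free_group mult_free_group one_free_group reduce_eq_self)

lemma inv_free_group:
  assumes "x \<in> carrier (free_group d)"
  shows "inv\<^bsub>free_group d\<^esub> x = reduce (word_inv x)"
proof (rule group.inv_equality[OF group_free_group])
  show "reduce (word_inv x) \<otimes>\<^bsub>free_group d\<^esub> x = \<one>\<^bsub>free_group d\<^esub>"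
    by (simp add: mult_free_group one_free_group)
  show "reduce (word_inv x) \<in> carrier (free_group d)"
    using assms by (intro reduce_in_carrier_free_group) (auto simp: carrier_free_group word_inv_def)
qed (fact assms)

lemma countable_carrier_free_group: "countable (carrier (free_group d))"
  by (rule countable_subset[OF subset_UNIV]) simp

section \<open>The subgroups \<open>Delta T d p\<close>\<close>

definition level_letter :: "letter \<Rightarrow> int" where
  "level_letter x = (if fst x = 0 then (if snd x then 1 else -1) else 0)"

definition level :: "letter list \<Rightarrow> int" where
  "level w = sum_list (map level_letter w)"

fun erase :: "int set \<Rightarrow> int \<Rightarrow> letter list \<Rightarrow> letter list" where
  "erase T p [] = []"
| "erase T p (x # w) = (if fst x \<noteq> 0 \<and> p \<in> T then [] else [x]) @ erase T (p + level_letter x) w"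

fun visited_levels :: "letter list \<Rightarrow> int set" where
  "visited_levels [] = {}"
| "visited_levels (x # w) =
     (if fst x \<noteq> 0 then {0} else {}) \<union> (\<lambda>c. c + level_letter x) ` visited_levels w"

definition Delta :: "int set \<Rightarrow> nat \<Rightarrow> int \<Rightarrow> letter list set" where
  "Delta T d p = {w \<in> carrier (free_group d). reduce (erase T p w) = []}"

lemma level_letter_letter_inv [simp]: "level_letter (letter_inv x) = - level_letter x"
  by (simp add: level_letter_def)

lemma level_Nil [simp]: "level [] = 0"
  and level_Cons [simp]: "level (x # w) = level_letter x + level w"
  and level_append [simp]: "level (u @ w) = level u + level w"
  by (simp_all add: level_def)

lemma level_push: "level (push x w) = level_letter x + level w"
  by (cases w) (auto simp: push_def inverse_letters_iff)

lemma level_reduce [simp]: "level (reduce w) = level w"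
proof -
  have "level (foldr push w []) = level w"
    by (induction w) (simp_all add: level_push)
  then show ?thesis
    by (simp add: reduce_eq_foldr_push)
qed

lemma level_word_inv [simp]: "level (word_inv w) = - level w"
  by (induction w) (simp_all add: word_inv_Cons)

lemma level_mult: "level (v \<otimes>\<^bsub>free_group d\<^esub> w) = level v + level w"
  by (simp add: mult_free_group)

lemma level_inv: "w \<in> carrier (free_group d) \<Longrightarrow> level (inv\<^bsub>free_group d\<^esub> w) = - level w"
  by (simp add: inv_free_group)

lemma level_pow: "level (w [^]\<^bsub>free_group d\<^esub> (n::nat)) = int n * level w"
  by (induction n) (simp_all add: one_free_group level_mult algebra_simps)

lemma erase_append: "erase T p (u @ w) = erase T p u @ erase T (p + level u) w"
  by (induction u arbitrary: p) (simp_all add: add.assoc)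

lemma level_erase [simp]: "level (erase T p w) = level w"
  by (induction w arbitrary: p) (simp_all add: level_letter_def)

lemma erase_empty [simp]: "erase {} p w = w"
  by (induction w arbitrary: p) simp_all

lemma reduce_erase_push: "reduce (erase T p (push x w)) = reduce (erase T p (x # w))"
proof (cases w)
  case (Cons y v)
  show ?thesis
  proof (cases "y = letter_inv x")
    case True
    then have "erase T p (x # w) = (if fst x \<noteq> 0 \<and> p \<in> T then [] else [x, letter_inv x]) @ erase T p v"
      using Cons by (auto simp: level_letter_def)
    then show ?thesis
      using Cons True by (auto simp: push_Cons reduce_Cons_letter_inv)
  qed (simp add: Cons push_Cons)
qed (simp add: push_def)

lemma reduce_erase_reduce [simp]: "reduce (erase T p (reduce w)) = reduce (erase T p w)"
proof -
  have "reduce (erase T p (foldr push w [])) = reduce (erase T p w)" for p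
  proof (induction w arbitrary: p)
    case (Cons x w)
    have "reduce (erase T p (foldr push (x # w) [])) = reduce (erase T p (x # foldr push w []))"
      by (simp add: reduce_erase_push)
    also have "\<dots> = reduce (erase T p (x # w))"
      using reduce_append_reduce_right[of _ "erase T (p + level_letter x) _"] Cons by (metis erase.simps(2))
    finally show ?case .
  qed simp
  then show ?thesis
    by (simp add: reduce_eq_foldr_push)
qed

lemma erase_word_inv: "erase T p (word_inv w) = word_inv (erase T (p - level w) w)"
  by (induction w arbitrary: p) (auto simp: word_inv_Cons erase_append word_inv_append level_letter_def)

lemma erase_cong:
  assumes "\<forall>c \<in> visited_levels w. p + c \<in> T \<longleftrightarrow> p' + c \<in> T'"
  shows "erase T p w = erase T' p' w"
  using assms
proof (induction w arbitrary: p p')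
  case (Cons x w)
  have "\<forall>c \<in> visited_levels w. p + level_letter x + c \<in> T \<longleftrightarrow> p' + level_letter x + c \<in> T'"
  proof
    fix c assume "c \<in> visited_levels w"
    then have "c + level_letter x \<in> visited_levels (x # w)"
      by simp
    from bspec[OF Cons.prems this]
    show "p + level_letter x + c \<in> T \<longleftrightarrow> p' + level_letter x + c \<in> T'"
      by (simp add: ac_simps)
  qed
  then show ?case
    using Cons by auto
qed simp

lemma abs_visited_level_le: "c \<in> visited_levels w \<Longrightarrow> \<bar>c\<bar> \<le> int (length w)"
proof (induction w arbitrary: c)
  case (Cons x w)
  then show ?case
    by (auto simp: level_letter_def split: if_splits) fastforce+
qed simp

lemma level_Delta: "w \<in> Delta T d p \<Longrightarrow> level w = 0"
  by (metis (mono_tags) Delta_def level_Nil level_erase level_reduce mem_Collect_eq)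

lemma reduce_conj_eq_Nil_iff: "reduce (u @ v @ word_inv u) = [] \<longleftrightarrow> reduce v = []"
proof
  assume "reduce (u @ v @ word_inv u) = []"
  then have "reduce (word_inv u @ reduce (u @ v @ word_inv u) @ u) = []"
    by simp
  then show "reduce v = []"
    by (metis append.assoc reduce_append_reduce_left reduce_append_reduce_right reduce_word_inv_append
        append_Nil append_Nil2)
next
  assume "reduce v = []"
  then show "reduce (u @ v @ word_inv u) = []"
    by (metis append_Nil reduce_append_reduce_left reduce_append_reduce_right reduce_append_word_inv)
qed

lemma reduce_word_inv_eq_Nil: "reduce w = [] \<Longrightarrow> reduce (word_inv w) = []"
  by (metis append_Nil2 reduce_append_reduce_right reduce_word_inv_append)

lemma subgroup_Delta: "subgroup (Delta T d p) (free_group d)"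
proof -
  interpret group "free_group d" by (rule group_free_group)
  show ?thesis
  proof (rule subgroupI)
    show "Delta T d p \<noteq> {}"
      using one_closed by (auto simp: Delta_def one_free_group)
  next
    fix a assume a: "a \<in> Delta T d p"
    then have "reduce (erase T p (inv\<^bsub>free_group d\<^esub> a)) = reduce (word_inv (erase T p a))"
      by (simp add: Delta_def inv_free_group erase_word_inv level_Delta)
    also have "\<dots> = []"
      using a by (simp add: Delta_def reduce_word_inv_eq_Nil)
    finally show "inv\<^bsub>free_group d\<^esub> a \<in> Delta T d p"
      using a by (simp add: Delta_def)
  next
    fix a b assume a: "a \<in> Delta T d p" and b: "b \<in> Delta T d p"
    then have "reduce (erase T p (a \<otimes>\<^bsub>free_group d\<^esub> b)) = reduce (reduce (erase T p a) @ reduce (erase T p b))"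
      by (simp add: mult_free_group erase_append level_Delta)
    also have "\<dots> = []"
      using a b by (simp add: Delta_def)
    finally show "a \<otimes>\<^bsub>free_group d\<^esub> b \<in> Delta T d p"
      using a b by (simp add: Delta_def)
  qed (auto simp: Delta_def)
qed


lemma conj_mem_Delta:
  assumes g: "g \<in> carrier (free_group d)" and h: "h \<in> Delta T d q"
  shows "g \<otimes>\<^bsub>free_group d\<^esub> h \<otimes>\<^bsub>free_group d\<^esub> inv\<^bsub>free_group d\<^esub> g \<in> Delta T d (q - level g)"
proof -
  interpret group "free_group d" by (rule group_free_group)
  have "g \<otimes>\<^bsub>free_group d\<^esub> h \<otimes>\<^bsub>free_group d\<^esub> inv\<^bsub>free_group d\<^esub> g = reduce (g @ h @ word_inv g)"
    unfolding mult_free_group inv_free_group[OF g]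
    by (metis append.assoc reduce_append_reduce_left reduce_append_reduce_right)
  moreover have "erase T (q - level g) (g @ h @ word_inv g)
      = erase T (q - level g) g @ erase T q h @ word_inv (erase T (q - level g) g)"
    using level_Delta[OF h] by (simp add: erase_append erase_word_inv)
  moreover have "g \<otimes>\<^bsub>free_group d\<^esub> h \<otimes>\<^bsub>free_group d\<^esub> inv\<^bsub>free_group d\<^esub> g \<in> carrier (free_group d)"
    using g h by (simp add: Delta_def)
  ultimately show ?thesis
    using h by (simp add: Delta_def reduce_conj_eq_Nil_iff)
qed

lemma conj_mem_Delta_iff:
  assumes g: "g \<in> carrier (free_group d)" and w: "w \<in> carrier (free_group d)"
  shows "g \<otimes>\<^bsub>free_group d\<^esub> w \<otimes>\<^bsub>free_group d\<^esub> inv\<^bsub>free_group d\<^esub> g \<in> Delta T d p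
    \<longleftrightarrow> w \<in> Delta T d (p + level g)"
proof
  interpret group "free_group d" by (rule group_free_group)
  assume "w \<in> Delta T d (p + level g)"
  then show "g \<otimes>\<^bsub>free_group d\<^esub> w \<otimes>\<^bsub>free_group d\<^esub> inv\<^bsub>free_group d\<^esub> g \<in> Delta T d p"
    using conj_mem_Delta[OF g] by fastforce
next
  interpret group "free_group d" by (rule group_free_group)
  assume "g \<otimes>\<^bsub>free_group d\<^esub> w \<otimes>\<^bsub>free_group d\<^esub> inv\<^bsub>free_group d\<^esub> g \<in> Delta T d p"
  from conj_mem_Delta[OF inv_closed[OF g] this] show "w \<in> Delta T d (p + level g)"
    using conjugation_is_surj[of "inv\<^bsub>free_group d\<^esub> g" w] g w by (simp add: level_inv)
qed

lemma conj_sub_Delta: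
  assumes g: "g \<in> carrier (free_group d)"
  shows "conj_sub (free_group d) g (Delta T d q) = Delta T d (q - level g)"
proof -
  interpret group "free_group d" by (rule group_free_group)
  have "x \<in> conj_sub (free_group d) g (Delta T d q) \<longleftrightarrow> x \<in> Delta T d (q - level g)"
    if x: "x \<in> carrier (free_group d)" for x
  proof -
    have "inv\<^bsub>free_group d\<^esub> g \<in> carrier (free_group d)"
      using g by simp
    then show ?thesis
      using conj_sub_mem_iff[OF _ g x] conj_mem_Delta_iff[OF _ x, of "inv\<^bsub>free_group d\<^esub> g" T q]
      using g subgroup.subset[OF subgroup_Delta] by (simp add: level_inv)
  qed
  moreover have "conj_sub (free_group d) g (Delta T d q) \<subseteq> carrier (free_group d)"
    using subgroup.subset[OF subgroup_conj_sub[OF subgroup_Delta g]] .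
  ultimately show ?thesis
    using subgroup.subset[OF subgroup_Delta] by blast
qed

lemma Delta_cong:
  "\<forall>c \<in> visited_levels w. p + c \<in> T \<longleftrightarrow> p' + c \<in> T \<Longrightarrow>
    w \<in> Delta T d p \<longleftrightarrow> w \<in> Delta T d p'"
  by (simp add: Delta_def erase_cong[of w p T p' T])

lemma Delta_visits:
  assumes "w \<in> Delta T d p" "w \<noteq> []"
  shows "\<exists>c \<in> visited_levels w. p + c \<in> T"
proof (rule ccontr)
  assume "\<not> ?thesis"
  then have "erase T p w = w"
    using erase_cong[of w p T 0 "{}"] by simp
  then show False
    using assms by (auto simp: Delta_def carrier_free_group reduce_eq_self)
qed

lemma Delta_ne_trivial:
  assumes "2 \<le> d" "p \<in> T"
  shows "Delta T d p \<noteq> {\<one>\<^bsub>free_group d\<^esub>}"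
proof -
  have "[(1, True)] \<in> Delta T d p"
    using assms by (simp add: Delta_def carrier_free_group)
  then show ?thesis
    by (auto simp: one_free_group)
qed

section \<open>Lacunary signed sums\<close>

lemma abs_diff_digits_le: "(x::int) \<in> {-1, 0, 1} \<Longrightarrow> y \<in> {-1, 0, 1} \<Longrightarrow> \<bar>x - y\<bar> \<le> 2"
  by auto

locale lacunary =
  fixes L :: "nat \<Rightarrow> int"
  assumes pos: "0 < L i"
    and growth: "9 * L i \<le> L (Suc i)"
begin

definition signed_sums :: "int set" where
  "signed_sums = {\<Sum>i<N. c i * L i | N c. \<forall>i. c i \<in> {-1, 0, 1}}"

lemma mono: "i \<le> j \<Longrightarrow> L i \<le> L j"
proof (rule lift_Suc_mono_le[of L])
  show "L n \<le> L (Suc n)" for n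
    using pos[of n] growth[of n] by linarith
qed

lemma sum_le: "8 * (\<Sum>i<N. L i) \<le> L N"
proof (induction N)
  case 0
  then show ?case
    using pos[of 0] by simp
next
  case (Suc N)
  then show ?case
    using growth[of N] by simp
qed

lemma less_L: "int i < L i"
proof (induction i)
  case 0
  then show ?case
    using pos[of 0] by simp
next
  case (Suc i)
  then show ?case
    using growth[of i] by linarith
qed

lemma abs_digit_sum_le:
  assumes "\<forall>i. \<bar>c i\<bar> \<le> 2"
  shows "4 * \<bar>\<Sum>i<N. c i * L i\<bar> \<le> L N"
proof -
  have "\<bar>c i * L i\<bar> \<le> 2 * L i" for i
    using assms mult_right_mono[of "\<bar>c i\<bar>" 2 "L i"] pos[of i] by (simp add: abs_mult)
  then have "\<bar>\<Sum>i<N. c i * L i\<bar> \<le> (\<Sum>i<N. 2 * L i)"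
    by (intro order_trans[OF sum_abs] sum_mono)
  then show ?thesis
    using sum_le[of N] sum_distrib_left[of 2 L "{..<N}"] by linarith
qed

text \<open>The top nonzero digit dominates all lower ones.\<close>
lemma digit_sum_truncate:
  assumes digits: "\<forall>i. \<bar>c i\<bar> \<le> 2" and small: "4 * \<bar>\<Sum>i<N. c i * L i\<bar> < 3 * L K" and "K \<le> N"
  shows "(\<Sum>i<N. c i * L i) = (\<Sum>i<K. c i * L i)"
  using \<open>K \<le> N\<close> small
proof (induction N rule: nat_induct_at_least)
  case (Suc N)
  have "c N = 0"
  proof (rule ccontr)
    assume "c N \<noteq> 0"
    then have "L N \<le> \<bar>c N * L N\<bar>"
      using pos[of N] by (simp add: abs_mult mult_le_cancel_right1)
    moreover have "L K \<le> L N"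
      using Suc.hyps(1) by (rule mono)
    ultimately show False
      using Suc.prems abs_digit_sum_le[OF digits, of N] by (simp add: abs_if split: if_splits)
  qed
  then show ?case
    using Suc by simp
qed simp

lemma signed_sums_padded:
  assumes "x \<in> signed_sums"
  obtains N0 where "\<And>N. N0 \<le> N \<Longrightarrow> \<exists>c. (\<forall>i. c i \<in> {-1, 0, 1}) \<and> x = (\<Sum>i<N. c i * L i)"
proof -
  obtain N0 c where c: "\<forall>i. c i \<in> {-1, 0, 1}" and x: "x = (\<Sum>i<N0. c i * L i)"
    using assms by (auto simp: signed_sums_def)
  define c' where "c' i = (if i < N0 then c i else 0)" for i
  have "x = (\<Sum>i<N. c' i * L i)" if "N0 \<le> N" for N
    using that unfolding x c'_def
    by (intro sum.mono_neutral_cong_left) auto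
  moreover have "\<forall>i. c' i \<in> {-1, 0, 1}"
    using c by (simp add: c'_def)
  ultimately show thesis
    using that by blast
qed

lemma signed_sums_below:
  assumes "x \<in> signed_sums" "4 * \<bar>x\<bar> < 3 * L K"
  obtains c where "\<forall>i. c i \<in> {-1, 0, 1}" "x = (\<Sum>i<K. c i * L i)"
proof -
  obtain N0 where "\<exists>c. (\<forall>i. c i \<in> {-1, 0, 1}) \<and> x = (\<Sum>i<max N0 K. c i * L i)"
    using signed_sums_padded[OF assms(1)] by (metis max.cobounded1)
  then obtain c where c: "\<forall>i. c i \<in> {-1, 0, 1}" and x: "x = (\<Sum>i<max N0 K. c i * L i)"
    by blast
  have "\<bar>c i\<bar> \<le> 2" for i
    using abs_diff_digits_le[of "c i" 0] c by simp
  then have "x = (\<Sum>i<K. c i * L i)"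
    using digit_sum_truncate[of c "max N0 K" K] assms(2) x by simp
  then show thesis
    using that c by blast
qed

lemma signed_sums_shift_iff:
  assumes small: "4 * \<bar>y\<bar> < 3 * L K" and \<sigma>: "\<sigma> \<in> {1, -1}"
  shows "y + \<sigma> * L K \<in> signed_sums \<longleftrightarrow> y \<in> signed_sums"
proof
  assume "y \<in> signed_sums"
  then obtain c where c: "\<forall>i. c i \<in> {-1, 0, 1}" and y: "y = (\<Sum>i<K. c i * L i)"
    using small by (rule signed_sums_below)
  have "(\<Sum>i<K. (c(K := \<sigma>)) i * L i) = (\<Sum>i<K. c i * L i)"
    by (intro sum.cong) auto
  then have "y + \<sigma> * L K = (\<Sum>i<Suc K. (c(K := \<sigma>)) i * L i)"
    by (simp add: y)
  moreover have "\<forall>i. (c(K := \<sigma>)) i \<in> {-1, 0, 1}"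
    using c \<sigma> by auto
  ultimately show "y + \<sigma> * L K \<in> signed_sums"
    unfolding signed_sums_def by blast
next
  assume shifted: "y + \<sigma> * L K \<in> signed_sums"
  have "\<bar>\<sigma> * L K\<bar> = L K"
    using \<sigma> pos[of K] by auto
  then have "4 * \<bar>y + \<sigma> * L K\<bar> < 3 * L (Suc K)"
    using small pos[of K] growth[of K] abs_triangle_ineq[of y "\<sigma> * L K"] by (smt (verit))
  with shifted obtain c where c: "\<forall>i. c i \<in> {-1, 0, 1}"
    and cy: "y + \<sigma> * L K = (\<Sum>i<Suc K. c i * L i)"
    by (rule signed_sums_below)
  define c' where "c' = c(K := c K - \<sigma>)"
  have c'_K: "(\<Sum>i<K. c' i * L i) = (\<Sum>i<K. c i * L i)"
    by (intro sum.cong) (auto simp: c'_def)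
  have y: "y = (\<Sum>i<Suc K. c' i * L i)"
    using cy by (simp add: c'_K) (simp add: c'_def algebra_simps)
  have "\<bar>c' i\<bar> \<le> 2" for i
    using abs_diff_digits_le[of "c i" 0] abs_diff_digits_le[of "c K" \<sigma>] c \<sigma>
    by (auto simp: c'_def)
  then have "y = (\<Sum>i<K. c' i * L i)"
    using digit_sum_truncate[of c' "Suc K" K] small y by simp
  then show "y \<in> signed_sums"
    using c c'_K unfolding signed_sums_def by auto
qed

lemma signed_sums_diff:
  assumes "x \<in> signed_sums" "x' \<in> signed_sums"
  obtains N e where "M \<le> N" "\<forall>i. \<bar>e i\<bar> \<le> 2" "x - x' = (\<Sum>i<N. e i * L i)"
proof -
  obtain N0 where N0: "\<And>N. N0 \<le> N \<Longrightarrow> \<exists>c. (\<forall>i. c i \<in> {-1, 0, 1}) \<and> x = (\<Sum>i<N. c i * L i)"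
    using signed_sums_padded[OF assms(1)] by blast
  obtain N0' where N0': "\<And>N. N0' \<le> N \<Longrightarrow> \<exists>c. (\<forall>i. c i \<in> {-1, 0, 1}) \<and> x' = (\<Sum>i<N. c i * L i)"
    using signed_sums_padded[OF assms(2)] by blast
  define N where "N = max (max N0 N0') M"
  have "N0 \<le> N" "N0' \<le> N" "M \<le> N"
    by (simp_all add: N_def)
  obtain c where c: "\<forall>i. c i \<in> {-1, 0, 1}" "x = (\<Sum>i<N. c i * L i)"
    using N0[OF \<open>N0 \<le> N\<close>] by blast
  obtain c' where c': "\<forall>i. c' i \<in> {-1, 0, 1}" "x' = (\<Sum>i<N. c' i * L i)"
    using N0'[OF \<open>N0' \<le> N\<close>] by blast
  have "\<forall>i. \<bar>c i - c' i\<bar> \<le> 2"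
    using abs_diff_digits_le c(1) c'(1) by simp
  moreover have "x - x' = (\<Sum>i<N. (c i - c' i) * L i)"
    using c(2) c'(2) by (simp add: left_diff_distrib sum_subtractf)
  ultimately show thesis
    using \<open>M \<le> N\<close> by (intro that[of N "\<lambda>i. c i - c' i"]) auto
qed

text \<open>A difference of two signed sums has digits in \<open>[-2, 2]\<close>; this one would need the
  digit \<open>3\<close> at position \<open>n\<close>.\<close>
lemma signed_sums_gap:
  assumes "n' < n" and x: "x \<in> signed_sums" and x': "x' \<in> signed_sums"
    and small: "12 * \<bar>\<delta>\<bar> \<le> L n"
  shows "x - x' \<noteq> 3 * (L n - L n') + \<delta>"
proof
  assume eq: "x - x' = 3 * (L n - L n') + \<delta>"
  obtain N e where "Suc n \<le> N" and e: "\<forall>i. \<bar>e i\<bar> \<le> 2" and diff: "x - x' = (\<Sum>i<N. e i * L i)"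
    using signed_sums_diff[OF x x'] by blast
  have "9 * L n' \<le> L n"
    using growth[of n'] mono[of "Suc n'" n] \<open>n' < n\<close> by simp
  moreover have "- L n \<le> 12 * \<delta>" "12 * \<delta> \<le> L n"
    using small by (simp_all add: abs_le_iff)
  moreover have "12 * (x - x') = 36 * L n - 36 * L n' + 12 * \<delta>"
    using eq by simp
  ultimately have lower: "31 * L n \<le> 12 * (x - x')" and upper: "12 * (x - x') \<le> 37 * L n"
    using pos[of n'] by linarith+
  then have "4 * \<bar>x - x'\<bar> < 3 * L (Suc n)"
    using growth[of n] pos[of n] by linarith
  then have "4 * (x - x') = 4 * (\<Sum>i<n. e i * L i) + 4 * (e n * L n)"
    using digit_sum_truncate[OF e, of N "Suc n"] diff \<open>Suc n \<le> N\<close> by simp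
  moreover have "e n * L n \<le> 2 * L n"
    using e pos[of n] by (simp add: mult_right_mono abs_le_iff)
  moreover have "4 * \<bar>\<Sum>i<n. e i * L i\<bar> \<le> L n"
    using e by (rule abs_digit_sum_le)
  ultimately have "4 * (x - x') \<le> 9 * L n"
    using abs_ge_self[of "\<Sum>i<n. e i * L i"] by linarith
  then show False
    using lower pos[of n] by linarith
qed

lemma zero_in_signed_sums: "0 \<in> signed_sums"
  unfolding signed_sums_def by (intro CollectI exI[of _ 0] exI[of _ "\<lambda>_. 0"]) simp

lemma mem_Delta_shift_iff:
  assumes "4 * int (length w) < 3 * L K" "\<sigma> \<in> {1, -1}"
  shows "w \<in> Delta signed_sums d (\<sigma> * L K) \<longleftrightarrow> w \<in> Delta signed_sums d 0"
proof (rule Delta_cong, intro ballI)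
  fix c assume "c \<in> visited_levels w"
  then have "\<bar>c\<bar> \<le> int (length w)"
    by (rule abs_visited_level_le)
  then have "4 * \<bar>c\<bar> < 3 * L K"
    using assms(1) by linarith
  then show "\<sigma> * L K + c \<in> signed_sums \<longleftrightarrow> 0 + c \<in> signed_sums"
    using signed_sums_shift_iff[OF _ assms(2)] by (simp add: add.commute)
qed

lemma limitin_Delta_shift:
  assumes K: "filterlim K at_top F" and \<sigma>: "\<sigma> \<in> {1, -1}"
  shows "limitin (chabauty (free_group d)) (\<lambda>k. Delta signed_sums d (\<sigma> * L (K k)))
    (Delta signed_sums d 0) F"
proof (rule limitin_chabauty)
  have "[] \<in> carrier (free_group d)"
    by (simp add: carrier_free_group)
  then show "carrier (free_group d) \<noteq> {}"
    by blast
  show "Delta signed_sums d q \<in> Sub (free_group d)" for q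
    by (simp add: Sub_def subgroup_Delta)
  then show "\<forall>\<^sub>F k in F. Delta signed_sums d (\<sigma> * L (K k)) \<in> Sub (free_group d)"
    by simp
  fix x
  show "\<forall>\<^sub>F k in F. x \<in> Delta signed_sums d (\<sigma> * L (K k)) \<longleftrightarrow> x \<in> Delta signed_sums d 0"
    using filterlim_at_top[THEN iffD1, OF K, rule_format, of "4 * length x"]
  proof eventually_elim
    case (elim k)
    then have "4 * int (length x) < 3 * L (K k)"
      using less_L[of "K k"] by linarith
    then show ?case
      using \<sigma> by (rule mem_Delta_shift_iff)
  qed
qed

lemma mem_Delta_shifts_unique:
  assumes "w \<noteq> []"
    and m: "w \<in> Delta signed_sums d (p + 3 * L m)" "24 * int (length w) \<le> L m"
    and n: "w \<in> Delta signed_sums d (p + 3 * L n)" "24 * int (length w) \<le> L n"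
  shows "m = n"
proof -
  have near: "\<exists>c. \<bar>c\<bar> \<le> int (length w) \<and> p + 3 * L k + c \<in> signed_sums"
    if "w \<in> Delta signed_sums d (p + 3 * L k)" for k
    using Delta_visits[OF that \<open>w \<noteq> []\<close>] abs_visited_level_le by blast
  have "\<not> k' < k" if k: "w \<in> Delta signed_sums d (p + 3 * L k)" "24 * int (length w) \<le> L k"
    and k': "w \<in> Delta signed_sums d (p + 3 * L k')" for k k'
  proof
    assume "k' < k"
    obtain c where c: "\<bar>c\<bar> \<le> int (length w)" "p + 3 * L k + c \<in> signed_sums"
      using near[OF k(1)] by blast
    obtain c' where c': "\<bar>c'\<bar> \<le> int (length w)" "p + 3 * L k' + c' \<in> signed_sums"
      using near[OF k'] by blast
    have "\<bar>c - c'\<bar> \<le> 2 * int (length w)"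
      using c(1) c'(1) abs_triangle_ineq4[of c c'] by linarith
    then have "12 * \<bar>c - c'\<bar> \<le> 12 * (2 * int (length w))"
      by (rule mult_left_mono) simp
    then have "12 * \<bar>c - c'\<bar> \<le> L k"
      using k(2) by simp
    from signed_sums_gap[OF \<open>k' < k\<close> c(2) c'(2) this] show False
      by simp
  qed
  then show ?thesis
    using m n by (metis linorder_neqE_nat)
qed

end

section \<open>The boomerang subgroup\<close>

definition fact_scale :: "nat \<Rightarrow> int" where
  "fact_scale i = fact (i + 8)"

interpretation fact_scale: lacunary fact_scale
proof
  show "0 < fact_scale i" for i
    by (simp add: fact_scale_def)
  show "9 * fact_scale i \<le> fact_scale (Suc i)" for i
  proof -
    have "fact_scale (Suc i) = of_nat (i + 9) * fact_scale i"
      unfolding fact_scale_def using fact_Suc[of "i + 8", where 'a = int] by simp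
    then show ?thesis
      by (simp add: fact_scale_def mult_right_mono)
  qed
qed

lemma dvd_fact_scale:
  assumes "0 < m" "m \<le> i"
  shows "int m dvd fact_scale i"
proof -
  have "m dvd fact (i + 8)"
    using assms by (intro dvd_fact) simp_all
  then have "int m dvd int (fact (i + 8))"
    by (simp only: of_nat_dvd_iff)
  then show ?thesis
    by (simp add: fact_scale_def)
qed

lemma multiples_hit_fact_scale:
  fixes e :: int
  assumes "e \<noteq> 0"
  obtains \<sigma> :: int and n :: "nat \<Rightarrow> nat"
  where "\<sigma> \<in> {1, -1}" "\<And>k. Suc k \<le> n k"
    "\<And>k. - (int (n k) * e) = \<sigma> * fact_scale (Suc k * nat \<bar>e\<bar>)"
proof -
  define K where "K k = Suc k * nat \<bar>e\<bar>" for k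
  define n where "n k = nat (fact_scale (K k) div \<bar>e\<bar>)" for k
  have "\<bar>e\<bar> dvd fact_scale (K k)" for k
    using dvd_fact_scale[of "nat \<bar>e\<bar>" "K k"] assms by (simp add: K_def)
  then have n: "int (n k) * \<bar>e\<bar> = fact_scale (K k)" for k
    using fact_scale.pos[of "K k"] assms by (simp add: n_def pos_imp_zdiv_nonneg_iff)
  have shift: "- (int (n k) * e) = (if e > 0 then -1 else 1) * fact_scale (K k)" for k
    using n[of k] assms by (auto simp: abs_if algebra_simps)
  have scaled: "int (Suc k) * \<bar>e\<bar> \<le> int (n k) * \<bar>e\<bar>" for k
    using fact_scale.less_L[of "K k"] n[of k] by (simp add: K_def distrib_right)
  have "Suc k \<le> n k" for k
    using scaled[of k] mult_le_cancel_right_pos[of "\<bar>e\<bar>" "int (Suc k)" "int (n k)"] assms by simp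
  then show thesis
    using shift by (intro that[of "if e > 0 then -1 else 1" n]) (simp_all add: K_def)
qed

lemma boomerang_Delta_fact_scale: "boomerang (free_group d) (Delta fact_scale.signed_sums d 0)"
  unfolding boomerang_def
proof (intro conjI ballI)
  let ?\<Delta> = "Delta fact_scale.signed_sums d 0"
  show "subgroup ?\<Delta> (free_group d)"
    by (rule subgroup_Delta)
  fix g assume g: "g \<in> carrier (free_group d)"
  have conj_pow: "conj_sub (free_group d) (g [^]\<^bsub>free_group d\<^esub> m) ?\<Delta>
      = Delta fact_scale.signed_sums d (- (int m * level g))" for m :: nat
    using conj_sub_Delta[OF monoid.nat_pow_closed[OF group.is_monoid[OF group_free_group] g]]
    by (simp add: level_pow)
  show "\<exists>n :: nat \<Rightarrow> nat. filterlim n at_top sequentially \<and> limitin (chabauty (free_group d))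
      (\<lambda>k. conj_sub (free_group d) (g [^]\<^bsub>free_group d\<^esub> n k) ?\<Delta>) ?\<Delta> sequentially"
  proof (cases "level g = 0")
    case True
    have "limitin (chabauty (free_group d)) (\<lambda>k. ?\<Delta>) ?\<Delta> sequentially"
      by (rule limitin_chabauty) (auto simp: Sub_def subgroup_Delta carrier_free_group intro: exI[of _ "[]"])
    then show ?thesis
      using True by (intro exI[of _ "\<lambda>k::nat. k"]) (simp add: conj_pow filterlim_ident)
  next
    case False
    then obtain \<sigma> and n :: "nat \<Rightarrow> nat" where \<sigma>: "\<sigma> \<in> {1, -1}" and n: "\<And>k. Suc k \<le> n k"
      and shift: "\<And>k. - (int (n k) * level g) = \<sigma> * fact_scale (Suc k * nat \<bar>level g\<bar>)"
      by (rule multiples_hit_fact_scale) blast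
    have "0 < nat \<bar>level g\<bar>"
      using False by simp
    then have "k \<le> Suc k * nat \<bar>level g\<bar>" for k
      using mult_le_mono2[of 1 "nat \<bar>level g\<bar>" "Suc k"] by (simp add: Suc_le_eq)
    then have "filterlim (\<lambda>k. Suc k * nat \<bar>level g\<bar>) at_top sequentially"
      by (intro filterlim_at_top_mono[OF filterlim_ident]) auto
    then have "limitin (chabauty (free_group d))
        (\<lambda>k. conj_sub (free_group d) (g [^]\<^bsub>free_group d\<^esub> n k) ?\<Delta>) ?\<Delta> sequentially"
      using fact_scale.limitin_Delta_shift[OF _ \<sigma>] by (simp add: conj_pow shift)
    moreover have "filterlim n at_top sequentially"
    proof (intro filterlim_at_top_mono[OF filterlim_ident] always_eventually allI)
      show "k \<le> n k" for k
        using n[of k] by simp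
    qed
    ultimately show ?thesis
      by blast
  qed
qed

lemma closure_conj_class_Delta_fact_scale_separated:
  assumes w: "w \<in> carrier (free_group d)" "w \<noteq> []"
    and t: "\<And>n. t n \<in> carrier (free_group d)" "\<And>n. level (t n) = 3 * fact_scale (n + 24 * length w)"
    and H: "H \<in> (chabauty (free_group d)) closure_of (conj_class (free_group d) (Delta fact_scale.signed_sums d 0))"
      "t m \<otimes>\<^bsub>free_group d\<^esub> w \<otimes>\<^bsub>free_group d\<^esub> inv\<^bsub>free_group d\<^esub> t m \<in> H"
      "t n \<otimes>\<^bsub>free_group d\<^esub> w \<otimes>\<^bsub>free_group d\<^esub> inv\<^bsub>free_group d\<^esub> t n \<in> H"
  shows "m = n"
proof (rule closure_of_chabauty_at_most_one_mem[where H = H and m = m and n = n])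
  interpret group "free_group d" by (rule group_free_group)
  show "t k \<otimes>\<^bsub>free_group d\<^esub> w \<otimes>\<^bsub>free_group d\<^esub> inv\<^bsub>free_group d\<^esub> t k \<in> carrier (free_group d)" for k
    using t(1) w(1) by simp
  show "conj_class (free_group d) (Delta fact_scale.signed_sums d 0) \<subseteq> Sub (free_group d)"
    by (auto simp: conj_class_def conj_sub_Delta Sub_def subgroup_Delta)
  fix H' k k'
  assume "H' \<in> conj_class (free_group d) (Delta fact_scale.signed_sums d 0)"
  then obtain g where g: "g \<in> carrier (free_group d)" "H' = Delta fact_scale.signed_sums d (- level g)"
    by (auto simp: conj_class_def conj_sub_Delta)
  have mem: "w \<in> Delta fact_scale.signed_sums d (- level g + 3 * fact_scale (j + 24 * length w))"
    if "t j \<otimes>\<^bsub>free_group d\<^esub> w \<otimes>\<^bsub>free_group d\<^esub> inv\<^bsub>free_group d\<^esub> t j \<in> H'" for j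
    using that g(2) conj_mem_Delta_iff[OF t(1) w(1)] t(2) by simp
  have large: "24 * int (length w) \<le> fact_scale (j + 24 * length w)" for j
    using fact_scale.less_L[of "j + 24 * length w"] by simp
  assume "t k \<otimes>\<^bsub>free_group d\<^esub> w \<otimes>\<^bsub>free_group d\<^esub> inv\<^bsub>free_group d\<^esub> t k \<in> H'"
    and "t k' \<otimes>\<^bsub>free_group d\<^esub> w \<otimes>\<^bsub>free_group d\<^esub> inv\<^bsub>free_group d\<^esub> t k' \<in> H'"
  then have "k + 24 * length w = k' + 24 * length w"
    using fact_scale.mem_Delta_shifts_unique[OF w(2) mem large mem large] by blast
  then show "k = k'"
    by simp
qed (fact H)+

lemma IRS_closure_conj_class_Delta_eq_return:
  assumes "2 \<le> d" and M: "IRS (free_group d) M"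
    and supp: "emeasure M ((chabauty (free_group d)) closure_of
      (conj_class (free_group d) (Delta fact_scale.signed_sums d 0))) = 1"
  shows "M = return (chabauty_borel (free_group d)) {\<one>\<^bsub>free_group d\<^esub>}"
proof (rule IRS_eq_return_trivial[OF group_free_group countable_carrier_free_group M])
  interpret group "free_group d" by (rule group_free_group)
  fix w assume w: "w \<in> carrier (free_group d)" "w \<noteq> \<one>\<^bsub>free_group d\<^esub>"
  \<comment> \<open>\<open>t n = x0 [^] (3 * fact_scale (n + 24 * length w))\<close>; the offset makes \<open>length w\<close> small
    against \<open>fact_scale\<close>, as \<open>mem_Delta_shifts_unique\<close> requires\<close>
  define t where "t n = [(0, True)] [^]\<^bsub>free_group d\<^esub> (3 * fact (n + 24 * length w + 8) :: nat)" for n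
  have x0: "[(0, True)] \<in> carrier (free_group d)"
    using assms(1) by (simp add: carrier_free_group)
  show "emeasure M {H \<in> Sub (free_group d). w \<in> H} = 0"
  proof (rule IRS_emeasure_mem_eq_0[OF group_free_group M supp w(1)])
    show "t n \<in> carrier (free_group d)" for n
      using x0 by (simp add: t_def)
    have "level (t n) = 3 * fact_scale (n + 24 * length w)" for n
      by (simp add: t_def level_pow level_letter_def fact_scale_def)
    then show "m = n" if "H \<in> (chabauty (free_group d)) closure_of
        (conj_class (free_group d) (Delta fact_scale.signed_sums d 0))"
      "t m \<otimes>\<^bsub>free_group d\<^esub> w \<otimes>\<^bsub>free_group d\<^esub> inv\<^bsub>free_group d\<^esub> t m \<in> H"
      "t n \<otimes>\<^bsub>free_group d\<^esub> w \<otimes>\<^bsub>free_group d\<^esub> inv\<^bsub>free_group d\<^esub> t n \<in> H" for H m n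
      using closure_conj_class_Delta_fact_scale_separated[OF w(1) _ _ _ that] w(2) x0
      by (simp add: one_free_group t_def)
  qed
qed

theorem corollary1p5:
  fixes d :: nat
  assumes "d \<ge> 2"
  shows "\<exists>\<Delta>. boomerang (free_group d) \<Delta> \<and> \<Delta> \<noteq> {\<one>\<^bsub>free_group d\<^esub>} \<and>
           (\<forall>M. IRS (free_group d) M \<and>
                 emeasure M ((chabauty (free_group d)) closure_of (conj_class (free_group d) \<Delta>)) = 1
               \<longrightarrow> M = return (chabauty_borel (free_group d)) {\<one>\<^bsub>free_group d\<^esub>})"
proof (intro exI[of _ "Delta fact_scale.signed_sums d 0"] conjI allI impI)
  show "boomerang (free_group d) (Delta fact_scale.signed_sums d 0)"
    by (rule boomerang_Delta_fact_scale)
  show "Delta fact_scale.signed_sums d 0 \<noteq> {\<one>\<^bsub>free_group d\<^esub>}"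
    using assms fact_scale.zero_in_signed_sums by (rule Delta_ne_trivial)
qed (use IRS_closure_conj_class_Delta_eq_return assms in blast)

end
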